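(* Let $K, L$ be compact convex subsets of $\mathbb{R}^n$ and let $\psi: \mathbb{R}^n \rightarrow \mathbb{R}^n$ be a nonsingular linear transformation. Then $L_u$ contains a translate of $K_u$ for every unit vector $u$ if and only if $(\psi L)_u$ contains a translate of $(\psi K)_u$ for every unit vector $u$.
   Context: For a unit vector $u$ and a set $S\subseteq\mathbb{R}^n$, $S_u$ denotes the orthogonal projection of $S$ onto the hyperplane $u^\perp$. *)

theory Defs
  imports "HOL-Analysis.Analysis"
begin

definition proj_hyp :: "'a::euclidean_space \<Rightarrow> 'a set \<Rightarrow> 'a set" where
  "proj_hyp u S = (\<lambda>x. x - (x \<bullet> u) *\<^sub>R u) ` S"

definition contains_translate :: "'a::real_vector set \<Rightarrow> 'a set \<Rightarrow> bool" where
  "contains_translate B A \<longleftrightarrow> (\<exists>t. (\<lambda>x. t + x) ` A \<subseteq> B)"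

end

theory Submission
  imports Defs
begin

text \<open>A translate of \<open>K\<^sub>u\<close> lies in \<open>L\<^sub>u\<close> exactly when a translate of \<open>K\<close> lies in the
  cylinder \<open>L + \<real>u\<close>. This reformulation no longer needs \<open>u\<close> to be a unit vector, depends
  only on the line spanned by \<open>u\<close>, and commutes with linear maps; a nonsingular linear map
  permutes the lines through the origin, so the condition over all directions is invariant.\<close>

definition cylinder :: "'a::real_vector set \<Rightarrow> 'a \<Rightarrow> 'a set" where
  "cylinder L v = {l + c *\<^sub>R v | l c. l \<in> L}"

lemma contains_translate_proj_hyp_iff_cylinder:
  fixes u :: "'a::euclidean_space"
  assumes "norm u = 1"
  shows "contains_translate (proj_hyp u L) (proj_hyp u K) \<longleftrightarrow> contains_translate (cylinder L u) K"
proof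
  assume "contains_translate (proj_hyp u L) (proj_hyp u K)"
  then obtain t where t: "\<And>k. k \<in> K \<Longrightarrow> t + (k - (k \<bullet> u) *\<^sub>R u) \<in> proj_hyp u L"
    unfolding contains_translate_def proj_hyp_def by blast
  have "t + k \<in> cylinder L u" if "k \<in> K" for k
  proof -
    from t[OF that] obtain l where "l \<in> L" "t + (k - (k \<bullet> u) *\<^sub>R u) = l - (l \<bullet> u) *\<^sub>R u"
      unfolding proj_hyp_def by blast
    then have "t + k = l + (k \<bullet> u - l \<bullet> u) *\<^sub>R u"
      by (simp add: algebra_simps)
    with \<open>l \<in> L\<close> show ?thesis
      unfolding cylinder_def by blast
  qed
  then show "contains_translate (cylinder L u) K"
    unfolding contains_translate_def by blast
next
  have uu: "u \<bullet> u = 1"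
    using assms by (simp add: dot_square_norm)
  let ?p = "\<lambda>x. x - (x \<bullet> u) *\<^sub>R u"
  assume "contains_translate (cylinder L u) K"
  then obtain s where s: "\<And>k. k \<in> K \<Longrightarrow> s + k \<in> cylinder L u"
    unfolding contains_translate_def by blast
  have "?p s + ?p k \<in> proj_hyp u L" if "k \<in> K" for k
  proof -
    from s[OF that] obtain l c where "l \<in> L" and e: "s + k = l + c *\<^sub>R u"
      unfolding cylinder_def by blast
    have "?p s + ?p k = ?p (s + k)"
      by (simp add: algebra_simps inner_add_left)
    also have "\<dots> = ?p (l + c *\<^sub>R u)"
      by (simp only: e)
    also have "\<dots> = ?p l"
      by (simp add: inner_add_left uu algebra_simps)
    finally show ?thesis
      using \<open>l \<in> L\<close> unfolding proj_hyp_def by blast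
  qed
  then show "contains_translate (proj_hyp u L) (proj_hyp u K)"
    unfolding contains_translate_def by (auto simp: proj_hyp_def)
qed

lemma cylinder_scaleR_subset: "cylinder L (a *\<^sub>R v) \<subseteq> cylinder L v"
proof
  fix x assume "x \<in> cylinder L (a *\<^sub>R v)"
  then obtain l c where "l \<in> L" "x = l + (c * a) *\<^sub>R v"
    unfolding cylinder_def by auto
  then show "x \<in> cylinder L v"
    unfolding cylinder_def by blast
qed

lemma cylinder_scaleR:
  assumes "a \<noteq> 0"
  shows "cylinder L (a *\<^sub>R v) = cylinder L v"
proof
  have "cylinder L v = cylinder L (inverse a *\<^sub>R (a *\<^sub>R v))"
    using assms by simp
  then show "cylinder L v \<subseteq> cylinder L (a *\<^sub>R v)"
    using cylinder_scaleR_subset by metis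
qed (rule cylinder_scaleR_subset)

lemma linear_image_cylinder:
  assumes "linear f"
  shows "f ` cylinder L v = cylinder (f ` L) (f v)"
  using assms unfolding cylinder_def by (force simp: linear_add linear_scale)

lemma contains_translate_linear_image_iff:
  assumes "linear f" "inj f" "surj f"
  shows "contains_translate (f ` B) (f ` A) \<longleftrightarrow> contains_translate B A"
proof -
  have "(+) (f t) ` f ` A = f ` (+) t ` A" for t
    using assms(1) by (auto simp: image_image linear_add)
  moreover have "f ` X \<subseteq> f ` B \<longleftrightarrow> X \<subseteq> B" for X
    using assms(2) by (rule inj_image_subset_iff)
  ultimately have "(+) (f t) ` f ` A \<subseteq> f ` B \<longleftrightarrow> (+) t ` A \<subseteq> B" for t
    by simp
  then show ?thesis
    unfolding contains_translate_def by (metis assms(3) surj_f_inv_f)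
qed

lemma all_unit_iff_all_nonzero_cylinder:
  fixes P :: "'a::real_normed_vector set \<Rightarrow> bool"
  shows "(\<forall>u. norm u = 1 \<longrightarrow> P (cylinder L u)) \<longleftrightarrow> (\<forall>v. v \<noteq> 0 \<longrightarrow> P (cylinder L v))"
proof (intro iffI allI impI)
  fix v :: 'a
  assume "\<forall>u. norm u = 1 \<longrightarrow> P (cylinder L u)" and "v \<noteq> 0"
  then have "P (cylinder L ((1 / norm v) *\<^sub>R v))"
    by simp
  with \<open>v \<noteq> 0\<close> show "P (cylinder L v)"
    by (simp add: cylinder_scaleR)
qed (metis norm_zero zero_neq_one)

theorem proposition4p1:
  fixes K L :: "'a::euclidean_space set" and \<psi> :: "'a \<Rightarrow> 'a"
  assumes "compact K" "convex K" "compact L" "convex L"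
    and "linear \<psi>" "inj \<psi>"
  shows "(\<forall>u. norm u = 1 \<longrightarrow> contains_translate (proj_hyp u L) (proj_hyp u K)) \<longleftrightarrow>
         (\<forall>u. norm u = 1 \<longrightarrow> contains_translate (proj_hyp u (\<psi> ` L)) (proj_hyp u (\<psi> ` K)))"
proof -
  have lin: "linear \<psi>" and inj: "inj \<psi>" and surj: "surj \<psi>"
    using assms linear_inj_imp_surj by auto
  have nonzero: "\<psi> v \<noteq> 0 \<longleftrightarrow> v \<noteq> 0" for v
    using lin inj by (metis linear_0 injD)
  have image: "contains_translate (cylinder L v) K \<longleftrightarrow>
      contains_translate (cylinder (\<psi> ` L) (\<psi> v)) (\<psi> ` K)" for v
    by (simp add: linear_image_cylinder[OF lin, symmetric]
        contains_translate_linear_image_iff[OF lin inj surj])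
  have "(\<forall>u. norm u = 1 \<longrightarrow> contains_translate (proj_hyp u L) (proj_hyp u K))
      \<longleftrightarrow> (\<forall>v. v \<noteq> 0 \<longrightarrow> contains_translate (cylinder L v) K)"
    using all_unit_iff_all_nonzero_cylinder[of "\<lambda>C. contains_translate C K" L]
    by (simp add: contains_translate_proj_hyp_iff_cylinder)
  also have "\<dots> \<longleftrightarrow> (\<forall>v. \<psi> v \<noteq> 0 \<longrightarrow> contains_translate (cylinder (\<psi> ` L) (\<psi> v)) (\<psi> ` K))"
    by (simp add: nonzero image)
  also have "\<dots> \<longleftrightarrow> (\<forall>w. w \<noteq> 0 \<longrightarrow> contains_translate (cylinder (\<psi> ` L) w) (\<psi> ` K))"
    by (metis surj surj_f_inv_f)
  also have "\<dots> \<longleftrightarrow>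
      (\<forall>u. norm u = 1 \<longrightarrow> contains_translate (proj_hyp u (\<psi> ` L)) (proj_hyp u (\<psi> ` K)))"
    using all_unit_iff_all_nonzero_cylinder[of "\<lambda>C. contains_translate C (\<psi> ` K)" "\<psi> ` L"]
    by (simp add: contains_translate_proj_hyp_iff_cylinder)
  finally show ?thesis .
qed

end
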